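(* Let $(X, M, \ast)$ be a stationary fuzzy metric space (in the sense of George and Veeramani), and write $M(x,y)$ for the constant value of $M(x,y,t)$, $t>0$. Define $\hat{M}: X^2\times X^2\times(0,+\infty)\to[0,1]$ by $\hat{M}((x_1,x_2),(y_1,y_2),t)=\min\{M(x_1,y_1),M(x_2,y_2)\}$, so that $(X^2,\hat{M},\ast)$ is a fuzzy metric space. Then the function $X^2\to(0,1]$, $(x,y)\mapsto M(x,y)$, is $\mathbb{R}$-uniformly continuous with respect to $(X^2,\hat M,\ast)$; that is, for every $\varepsilon>0$ there exist $s>0$ and $\delta\in(0,1)$ such that for all $(x,z),(x',z')\in X^2$, $\hat{M}((x,z),(x',z'),s)>1-\delta$ implies $|M(x,z)-M(x',z')|<\varepsilon$.
   Context: A continuous $t$-norm $\ast$ is a continuous binary operation on $[0,1]$ that is associative, commutative, nondecreasing in each argument, and has $1$ as neutral element. A fuzzy metric space (George–Veeramani) is a triple $(X,M,\ast)$ where $X$ is a nonempty set, $\ast$ is a continuous $t$-norm, and $M: X\times X\times(0,+\infty)\to[0,1]$ satisfies, for all $x,y,z\in X$ and $s,t>0$: (GV1) $M(x,y,t)>0$; (GV2) $M(x,y,t)=1$ iff $x=y$; (GV3) $M(x,y,t)=M(y,x,t)$; (GV4) $M(x,y,t)\ast M(y,z,s)\le M(x,z,t+s)$; (GV5) $t\mapsto M(x,y,t)$ is continuous on $(0,+\infty)$. The fuzzy metric $M$ is stationary if for all $x,y\in X$ the function $t\mapsto M(x,y,t)$ is constant. A map $f:Y\to\mathbb{R}$ on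 a fuzzy metric space $(Y,N,\ast)$ is $\mathbb{R}$-uniformly continuous if for every $\varepsilon>0$ there exist $s>0$ and $\delta\in(0,1)$ such that $N(u,v,s)>1-\delta$ implies $|f(u)-f(v)|<\varepsilon$. *)

theory Defs
  imports "HOL-Analysis.Analysis"
begin

definition cont_tnorm :: "(real \<Rightarrow> real \<Rightarrow> real) \<Rightarrow> bool" where
  "cont_tnorm T \<longleftrightarrow>
     (\<forall>a\<in>{0..1}. \<forall>b\<in>{0..1}. T a b \<in> {0..1}) \<and>
     continuous_on ({0..1} \<times> {0..1}) (\<lambda>(a, b). T a b) \<and>
     (\<forall>a\<in>{0..1}. \<forall>b\<in>{0..1}. \<forall>c\<in>{0..1}. T (T a b) c = T a (T b c)) \<and>
     (\<forall>a\<in>{0..1}. \<forall>b\<in>{0..1}. T a b = T b a) \<and>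
     (\<forall>a\<in>{0..1}. \<forall>b\<in>{0..1}. \<forall>c\<in>{0..1}. \<forall>d\<in>{0..1}.
         a \<le> c \<longrightarrow> b \<le> d \<longrightarrow> T a b \<le> T c d) \<and>
     (\<forall>a\<in>{0..1}. T a 1 = a)"

definition fuzzy_metric_space ::
  "'a set \<Rightarrow> ('a \<Rightarrow> 'a \<Rightarrow> real \<Rightarrow> real) \<Rightarrow> (real \<Rightarrow> real \<Rightarrow> real) \<Rightarrow> bool" where
  "fuzzy_metric_space X M T \<longleftrightarrow> X \<noteq> {} \<and> cont_tnorm T \<and>
     (\<forall>x\<in>X. \<forall>y\<in>X. \<forall>t>0. M x y t \<in> {0..1}) \<and>
     (\<forall>x\<in>X. \<forall>y\<in>X. \<forall>t>0. M x y t > 0) \<and>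
     (\<forall>x\<in>X. \<forall>y\<in>X. \<forall>t>0. M x y t = 1 \<longleftrightarrow> x = y) \<and>
     (\<forall>x\<in>X. \<forall>y\<in>X. \<forall>t>0. M x y t = M y x t) \<and>
     (\<forall>x\<in>X. \<forall>y\<in>X. \<forall>z\<in>X. \<forall>t>0. \<forall>s>0. T (M x y t) (M y z s) \<le> M x z (t + s)) \<and>
     (\<forall>x\<in>X. \<forall>y\<in>X. continuous_on {0<..} (M x y))"

definition stationary :: "'a set \<Rightarrow> ('a \<Rightarrow> 'a \<Rightarrow> real \<Rightarrow> real) \<Rightarrow> bool" where
  "stationary X M \<longleftrightarrow> (\<forall>x\<in>X. \<forall>y\<in>X. \<forall>t>0. \<forall>s>0. M x y t = M x y s)"

text \<open>The product fuzzy metric; for stationary M, M x y 1 is the constant value.\<close>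
definition Mhat :: "('a \<Rightarrow> 'a \<Rightarrow> real \<Rightarrow> real) \<Rightarrow> 'a \<times> 'a \<Rightarrow> 'a \<times> 'a \<Rightarrow> real \<Rightarrow> real" where
  "Mhat M p q t = min (M (fst p) (fst q) 1) (M (snd p) (snd q) 1)"

definition R_uniformly_continuous ::
  "'b set \<Rightarrow> ('b \<Rightarrow> 'b \<Rightarrow> real \<Rightarrow> real) \<Rightarrow> ('b \<Rightarrow> real) \<Rightarrow> bool" where
  "R_uniformly_continuous Y N f \<longleftrightarrow>
     (\<forall>\<epsilon>>0. \<exists>s>0. \<exists>\<delta>. 0 < \<delta> \<and> \<delta> < 1 \<and>
        (\<forall>u\<in>Y. \<forall>v\<in>Y. N u v s > 1 - \<delta> \<longrightarrow> \<bar>f u - f v\<bar> < \<epsilon>))"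

end

theory Submission
  imports Defs
begin

text \<open>
  For stationary \<open>M\<close> the triangle inequality, applied once on each side of the
  quadrilateral \<open>x, x', z', z\<close>, gives \<open>M x z \<ge> T c (T (M x' z') c)\<close> whenever
  \<open>M x x'\<close> and \<open>M z z'\<close> are at least \<open>c\<close>. Since a continuous t-norm is uniformly
  continuous on the unit square and has \<open>1\<close> as neutral element, \<open>T a c\<close> is close to \<open>a\<close>
  uniformly in \<open>a\<close> once \<open>c\<close> is close to \<open>1\<close>; hence \<open>M x z > M x' z' - \<epsilon>\<close>, and by
  symmetry \<open>|M x z - M x' z'| < \<epsilon>\<close>.
\<close>

lemma cont_tnorm_closed:
  "cont_tnorm T \<Longrightarrow> a \<in> {0..1} \<Longrightarrow> b \<in> {0..1} \<Longrightarrow> T a b \<in> {0..1}"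
  unfolding cont_tnorm_def by blast

lemma cont_tnorm_commute:
  "cont_tnorm T \<Longrightarrow> a \<in> {0..1} \<Longrightarrow> b \<in> {0..1} \<Longrightarrow> T a b = T b a"
  unfolding cont_tnorm_def by blast

lemma cont_tnorm_mono:
  "cont_tnorm T \<Longrightarrow> a \<in> {0..1} \<Longrightarrow> b \<in> {0..1} \<Longrightarrow> c \<in> {0..1} \<Longrightarrow> d \<in> {0..1} \<Longrightarrow>
    a \<le> c \<Longrightarrow> b \<le> d \<Longrightarrow> T a b \<le> T c d"
  unfolding cont_tnorm_def by blast

lemma cont_tnorm_one_right: "cont_tnorm T \<Longrightarrow> a \<in> {0..1} \<Longrightarrow> T a 1 = a"
  unfolding cont_tnorm_def by blast

lemma cont_tnorm_uniformly_near_one: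
  assumes T: "cont_tnorm T" and "\<epsilon> > 0"
  obtains \<delta> where "0 < \<delta>" "\<delta> < 1" "\<And>a c. a \<in> {0..1} \<Longrightarrow> c \<in> {1 - \<delta>..1} \<Longrightarrow> a - \<epsilon> < T a c"
proof -
  have "continuous_on ({0..1} \<times> {0..1}) (\<lambda>(a, b). T a b)"
    using T unfolding cont_tnorm_def by blast
  then have "uniformly_continuous_on ({0..1} \<times> {0..1}) (\<lambda>(a, b). T a b)"
    by (intro compact_uniformly_continuous compact_Times compact_Icc)
  then obtain d where "d > 0" and d: "\<And>p q. p \<in> {0..1} \<times> {0..1} \<Longrightarrow> q \<in> {0..1} \<times> {0..1} \<Longrightarrow>
      dist q p < d \<Longrightarrow> dist ((\<lambda>(a, b). T a b) q) ((\<lambda>(a, b). T a b) p) < \<epsilon>"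
    unfolding uniformly_continuous_on_def using \<open>\<epsilon> > 0\<close> by metis
  define \<delta> where "\<delta> = min (d / 2) (1 / 2)"
  have "0 < \<delta>" "\<delta> < 1" "\<delta> < d" using \<open>d > 0\<close> by (auto simp: \<delta>_def)
  moreover have "a - \<epsilon> < T a c" if a: "a \<in> {0..1}" and c: "c \<in> {1 - \<delta>..1}" for a c
  proof -
    have "dist (a, c) (a, 1) < d"
      using c \<open>\<delta> < d\<close> by (simp add: dist_Pair_Pair dist_real_def)
    then have "dist (T a c) (T a 1) < \<epsilon>"
      using d[of "(a, 1)" "(a, c)"] a c \<open>\<delta> < 1\<close> by auto
    then show ?thesis
      using cont_tnorm_one_right[OF T a] by (simp add: dist_real_def)
  qed
  ultimately show ?thesis using that by blast
qed

lemma fuzzy_metric_range: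
  "fuzzy_metric_space X M T \<Longrightarrow> x \<in> X \<Longrightarrow> y \<in> X \<Longrightarrow> t > 0 \<Longrightarrow> M x y t \<in> {0..1}"
  by (simp add: fuzzy_metric_space_def)

lemma fuzzy_metric_sym:
  "fuzzy_metric_space X M T \<Longrightarrow> x \<in> X \<Longrightarrow> y \<in> X \<Longrightarrow> t > 0 \<Longrightarrow> M x y t = M y x t"
  by (simp add: fuzzy_metric_space_def)

lemma stationary_fuzzy_triangle:
  assumes fm: "fuzzy_metric_space X M T" and st: "stationary X M"
    and "x \<in> X" "y \<in> X" "z \<in> X" "t > 0"
  shows "T (M x y t) (M y z t) \<le> M x z t"
proof -
  have "\<forall>x\<in>X. \<forall>y\<in>X. \<forall>z\<in>X. \<forall>t>0. \<forall>s>0. T (M x y t) (M y z s) \<le> M x z (t + s)"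
    using fm by (simp add: fuzzy_metric_space_def)
  then have "T (M x y t) (M y z t) \<le> M x z (t + t)"
    using assms(3-6) by meson
  moreover have "M x z (t + t) = M x z t"
    using st assms(3-6) unfolding stationary_def by (meson add_pos_pos)
  ultimately show ?thesis by simp
qed

lemma stationary_fuzzy_quadrilateral:
  assumes fm: "fuzzy_metric_space X M T" and st: "stationary X M"
    and X: "x \<in> X" "z \<in> X" "x' \<in> X" "z' \<in> X" and "t > 0"
    and c: "c \<in> {0..1}" "c \<le> M x x' t" "c \<le> M z z' t"
  shows "T c (T (M x' z' t) c) \<le> M x z t"
proof -
  have T: "cont_tnorm T" using fm by (simp add: fuzzy_metric_space_def)
  note range = fuzzy_metric_range[OF fm _ _ \<open>t > 0\<close>]
  have "M z' z t = M z z' t" using fuzzy_metric_sym[OF fm] X \<open>t > 0\<close> by blast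
  then have "T (M x' z' t) c \<le> T (M x' z' t) (M z' z t)"
    using cont_tnorm_mono[OF T] range X c by simp
  also have "\<dots> \<le> M x' z t"
    using stationary_fuzzy_triangle[OF fm st] X \<open>t > 0\<close> by blast
  finally have "T c (T (M x' z' t) c) \<le> T (M x x' t) (M x' z t)"
    using cont_tnorm_mono[OF T] cont_tnorm_closed[OF T] range X c by simp
  also have "\<dots> \<le> M x z t"
    using stationary_fuzzy_triangle[OF fm st] X \<open>t > 0\<close> by blast
  finally show ?thesis .
qed

lemma stationary_fuzzy_metric_uniformly_close:
  assumes fm: "fuzzy_metric_space X M T" and st: "stationary X M" and "\<epsilon> > 0"
  obtains \<delta> where "0 < \<delta>" "\<delta> < 1"
    "\<And>x z x' z'. x \<in> X \<Longrightarrow> z \<in> X \<Longrightarrow> x' \<in> X \<Longrightarrow> z' \<in> X \<Longrightarrow>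
       1 - \<delta> < M x x' 1 \<Longrightarrow> 1 - \<delta> < M z z' 1 \<Longrightarrow> M x' z' 1 - \<epsilon> < M x z 1"
proof -
  have T: "cont_tnorm T" using fm by (simp add: fuzzy_metric_space_def)
  obtain \<delta> where \<delta>: "0 < \<delta>" "\<delta> < 1"
    and near: "\<And>a c. a \<in> {0..1} \<Longrightarrow> c \<in> {1 - \<delta>..1} \<Longrightarrow> a - \<epsilon> / 2 < T a c"
    using cont_tnorm_uniformly_near_one[OF T, of "\<epsilon> / 2"] \<open>\<epsilon> > 0\<close> by auto
  moreover have "M x' z' 1 - \<epsilon> < M x z 1"
    if X: "x \<in> X" "z \<in> X" "x' \<in> X" "z' \<in> X"
      and close: "1 - \<delta> < M x x' 1" "1 - \<delta> < M z z' 1" for x z x' z'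
  proof -
    let ?c = "1 - \<delta>" and ?m = "M x' z' 1"
    have c: "?c \<in> {0..1}" "?c \<in> {1 - \<delta>..1}" using \<delta> by auto
    have m: "?m \<in> {0..1}" using fuzzy_metric_range[OF fm] X by simp
    have "?m - \<epsilon> < T ?m ?c - \<epsilon> / 2" using near[OF m c(2)] by simp
    also have "\<dots> < T (T ?m ?c) ?c" using near[OF cont_tnorm_closed[OF T m c(1)] c(2)] by simp
    also have "\<dots> = T ?c (T ?m ?c)"
      using cont_tnorm_commute[OF T] cont_tnorm_closed[OF T m c(1)] c by simp
    also have "\<dots> \<le> M x z 1"
      using stationary_fuzzy_quadrilateral[OF fm st X] c close by simp
    finally show ?thesis .
  qed
  ultimately show ?thesis using that by blast
qed

theorem mainTheorem2:
  fixes X :: "'a set" and M :: "'a \<Rightarrow> 'a \<Rightarrow> real \<Rightarrow> real" and T :: "real \<Rightarrow> real \<Rightarrow> real"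
  assumes "fuzzy_metric_space X M T" and "stationary X M"
  shows "R_uniformly_continuous (X \<times> X) (Mhat M) (\<lambda>p. M (fst p) (snd p) 1)"
  unfolding R_uniformly_continuous_def
proof (intro allI impI)
  fix \<epsilon> :: real assume "\<epsilon> > 0"
  then obtain \<delta> where \<delta>: "0 < \<delta>" "\<delta> < 1" and close: "\<And>x z x' z'. x \<in> X \<Longrightarrow> z \<in> X \<Longrightarrow>
      x' \<in> X \<Longrightarrow> z' \<in> X \<Longrightarrow> 1 - \<delta> < M x x' 1 \<Longrightarrow> 1 - \<delta> < M z z' 1 \<Longrightarrow> M x' z' 1 - \<epsilon> < M x z 1"
    using stationary_fuzzy_metric_uniformly_close[OF assms] by metis
  have "\<bar>M x z 1 - M x' z' 1\<bar> < \<epsilon>"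
    if "x \<in> X" "z \<in> X" "x' \<in> X" "z' \<in> X" "1 - \<delta> < Mhat M (x, z) (x', z') 1" for x z x' z'
    using close[of x z x' z'] close[of x' z' x z] fuzzy_metric_sym[OF assms(1)] that
    by (auto simp: Mhat_def abs_less_iff)
  then show "\<exists>s>0. \<exists>\<delta>. 0 < \<delta> \<and> \<delta> < 1 \<and> (\<forall>u\<in>X \<times> X. \<forall>v\<in>X \<times> X.
      1 - \<delta> < Mhat M u v s \<longrightarrow> \<bar>M (fst u) (snd u) 1 - M (fst v) (snd v) 1\<bar> < \<epsilon>)"
    using \<delta> by (intro exI[of _ 1] exI[of _ \<delta>]) auto
qed

end
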